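(* If $(H,R)$ is a semiquasitriangular Hopf algebra, then $R_{12}R_{13}R_{23}=R_{23}R_{13}R_{12}$ in $H\otimes H\otimes H$.
   Context: All vector spaces are over a field $k$, $\otimes=\otimes_k$. For a Hopf algebra $H$ with comultiplication $\Delta$, counit $\epsilon$, antipode $S$, we use Sweedler notation $\Delta(h)=h_1\otimes h_2$, etc. $\operatorname{Z}(H)$ is the centre of $H$. For $R\in H\otimes H$ we write $R=R^{(1)}\otimes R^{(2)}$ (summation understood); $R'^{(1)}\otimes R'^{(2)}$ denotes another copy of $R$. $R_{12}=R^{(1)}\otimes R^{(2)}\otimes 1$, $R_{13}=R^{(1)}\otimes 1\otimes R^{(2)}$, $R_{23}=1\otimes R^{(1)}\otimes R^{(2)}$. Definition (semiquasitriangular Hopf algebra): a pair $(H,R)$ with $H$ a Hopf algebra with bijective antipode and $R\in H\otimes H$ invertible such that (1) $R^{(1)}_1\otimes R^{(1)}_2\otimes R^{(2)} = R^{(1)}\otimes R'^{(1)}\otimes R^{(2)}R'^{(2)}$; (2) $R^{(1)}\otimes R^{(2)}_1\otimes R^{(2)}_2 = R^{(1)}R'^{(1)}\otimes R'^{(2)}\otimes R^{(2)}$; (3) $R^{(1)}\otimes R^{(2)}_2R'^{(1)}\otimes R^{(2)}_1R'^{(2)} = R^{(1)}\otimes R'^{(1)}R^{(2)}_1\otimes R'^{(2)}R^{(2)}_2$; (4) $R^{(1)}_2R'^{(1)}\otimes R^{(1)}_1R'^{(2)}\otimes R^{(2)} = R'^{(1)}R^{(1)}_1\otimes R'^{(2)}R^{(1)}_2\otimes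 R^{(2)}$; (5) $\nu(h):=R^{(2)}h_2R'^{(2)}\otimes S(h_1)S(R^{(1)})h_3R'^{(1)}\in H\otimes\operatorname{Z}(H)$ for all $h\in H$; (6) $\nu(h)=R^{(1)}h_2R'^{(1)}\otimes S(R'^{(2)})S(h_1)R^{(2)}h_3$ for all $h\in H$. *)

theory Defs
  imports "HOL-Library.Poly_Mapping"
begin

(* A k-vector space is modelled via a basis indexed by a type 'i: its elements are the
finitely supported functions 'i \<Rightarrow>\<^sub>0 'k. Then H \<otimes> H is ('i \<times> 'i) \<Rightarrow>\<^sub>0 'k and
H \<otimes> H \<otimes> H is ('i \<times> 'i \<times> 'i) \<Rightarrow>\<^sub>0 'k (tensor products of bases). *)

definition scal :: "'k::semiring_0 \<Rightarrow> ('a \<Rightarrow>\<^sub>0 'k) \<Rightarrow> ('a \<Rightarrow>\<^sub>0 'k)" where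
  "scal c p = Poly_Mapping.map ((*) c) p"

definition bv :: "'a \<Rightarrow> ('a \<Rightarrow>\<^sub>0 'k::zero_neq_one)" where
  "bv a = Poly_Mapping.single a 1"

(* Linear extension: lsum x f = sum over basis vectors a of x of (coefficient) * f a.
Sweedler expressions are written with lsum over the basis expansion. *)
definition lsum :: "('a \<Rightarrow>\<^sub>0 'k::semiring_0) \<Rightarrow> ('a \<Rightarrow> ('b \<Rightarrow>\<^sub>0 'k)) \<Rightarrow> ('b \<Rightarrow>\<^sub>0 'k)" where
  "lsum x f = (\<Sum>a\<in>Poly_Mapping.keys x. scal (Poly_Mapping.lookup x a) (f a))"

definition tens :: "('a \<Rightarrow>\<^sub>0 'k::semiring_1) \<Rightarrow> ('b \<Rightarrow>\<^sub>0 'k) \<Rightarrow> ('a \<times> 'b \<Rightarrow>\<^sub>0 'k)" where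
  "tens x y = lsum x (\<lambda>a. lsum y (\<lambda>b. bv (a, b)))"

definition tens3 :: "('a \<Rightarrow>\<^sub>0 'k::semiring_1) \<Rightarrow> ('b \<Rightarrow>\<^sub>0 'k) \<Rightarrow> ('c \<Rightarrow>\<^sub>0 'k)
    \<Rightarrow> ('a \<times> 'b \<times> 'c \<Rightarrow>\<^sub>0 'k)" where
  "tens3 x y z = lsum x (\<lambda>a. lsum y (\<lambda>b. lsum z (\<lambda>c. bv (a, b, c))))"

definition linear_pm :: "(('a \<Rightarrow>\<^sub>0 'k::semiring_0) \<Rightarrow> ('b \<Rightarrow>\<^sub>0 'k)) \<Rightarrow> bool" where
  "linear_pm f \<longleftrightarrow> (\<forall>x y c. f (x + y) = f x + f y \<and> f (scal c x) = scal c (f x))"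

definition linear_form :: "(('a \<Rightarrow>\<^sub>0 'k::semiring_0) \<Rightarrow> 'k) \<Rightarrow> bool" where
  "linear_form f \<longleftrightarrow> (\<forall>x y c. f (x + y) = f x + f y \<and> f (scal c x) = c * f x)"

definition mult2 :: "(('i \<Rightarrow>\<^sub>0 'k::field) \<Rightarrow> ('i \<Rightarrow>\<^sub>0 'k) \<Rightarrow> ('i \<Rightarrow>\<^sub>0 'k))
    \<Rightarrow> ('i \<times> 'i \<Rightarrow>\<^sub>0 'k) \<Rightarrow> ('i \<times> 'i \<Rightarrow>\<^sub>0 'k) \<Rightarrow> ('i \<times> 'i \<Rightarrow>\<^sub>0 'k)" where
  "mult2 mult X Y = lsum X (\<lambda>(a, b). lsum Y (\<lambda>(c, d).
      tens (mult (bv a) (bv c)) (mult (bv b) (bv d))))"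

definition mult3 :: "(('i \<Rightarrow>\<^sub>0 'k::field) \<Rightarrow> ('i \<Rightarrow>\<^sub>0 'k) \<Rightarrow> ('i \<Rightarrow>\<^sub>0 'k))
    \<Rightarrow> ('i \<times> 'i \<times> 'i \<Rightarrow>\<^sub>0 'k) \<Rightarrow> ('i \<times> 'i \<times> 'i \<Rightarrow>\<^sub>0 'k) \<Rightarrow> ('i \<times> 'i \<times> 'i \<Rightarrow>\<^sub>0 'k)" where
  "mult3 mult X Y = lsum X (\<lambda>(a, b, c). lsum Y (\<lambda>(a', b', c').
      tens3 (mult (bv a) (bv a')) (mult (bv b) (bv b')) (mult (bv c) (bv c'))))"

(* Iterated comultiplication h \<mapsto> h_1 \<otimes> h_2 \<otimes> h_3 = (\<Delta> \<otimes> id) \<Delta> h. *)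
definition com2 :: "(('i \<Rightarrow>\<^sub>0 'k::field) \<Rightarrow> ('i \<times> 'i \<Rightarrow>\<^sub>0 'k))
    \<Rightarrow> ('i \<Rightarrow>\<^sub>0 'k) \<Rightarrow> ('i \<times> 'i \<times> 'i \<Rightarrow>\<^sub>0 'k)" where
  "com2 com h = lsum (com h) (\<lambda>(a, b). lsum (com (bv a)) (\<lambda>(c, d). tens3 (bv c) (bv d) (bv b)))"

definition hopf_algebra ::
  "(('i \<Rightarrow>\<^sub>0 'k::field) \<Rightarrow> ('i \<Rightarrow>\<^sub>0 'k) \<Rightarrow> ('i \<Rightarrow>\<^sub>0 'k)) \<Rightarrow> ('i \<Rightarrow>\<^sub>0 'k)
   \<Rightarrow> (('i \<Rightarrow>\<^sub>0 'k) \<Rightarrow> ('i \<times> 'i \<Rightarrow>\<^sub>0 'k)) \<Rightarrow> (('i \<Rightarrow>\<^sub>0 'k) \<Rightarrow> 'k)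
   \<Rightarrow> (('i \<Rightarrow>\<^sub>0 'k) \<Rightarrow> ('i \<Rightarrow>\<^sub>0 'k)) \<Rightarrow> bool" where
  "hopf_algebra mult one com cou ant \<longleftrightarrow>
     (\<forall>x. linear_pm (mult x)) \<and> (\<forall>y. linear_pm (\<lambda>x. mult x y)) \<and>
     linear_pm com \<and> linear_form cou \<and> linear_pm ant \<and>
     (\<forall>x y z. mult (mult x y) z = mult x (mult y z)) \<and>
     (\<forall>x. mult one x = x \<and> mult x one = x) \<and>
     (\<forall>x. lsum (com x) (\<lambda>(a, b). lsum (com (bv a)) (\<lambda>(c, d). tens3 (bv c) (bv d) (bv b)))
          = lsum (com x) (\<lambda>(a, b). lsum (com (bv b)) (\<lambda>(c, d). tens3 (bv a) (bv c) (bv d)))) \<and>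
     (\<forall>x. lsum (com x) (\<lambda>(a, b). scal (cou (bv a)) (bv b)) = x) \<and>
     (\<forall>x. lsum (com x) (\<lambda>(a, b). scal (cou (bv b)) (bv a)) = x) \<and>
     (\<forall>x y. com (mult x y) = mult2 mult (com x) (com y)) \<and>
     com one = tens one one \<and>
     (\<forall>x y. cou (mult x y) = cou x * cou y) \<and> cou one = 1 \<and>
     (\<forall>x. lsum (com x) (\<lambda>(a, b). mult (ant (bv a)) (bv b)) = scal (cou x) one) \<and>
     (\<forall>x. lsum (com x) (\<lambda>(a, b). mult (bv a) (ant (bv b))) = scal (cou x) one) \<and>
     bij ant"

definition central :: "(('i \<Rightarrow>\<^sub>0 'k::field) \<Rightarrow> ('i \<Rightarrow>\<^sub>0 'k) \<Rightarrow> ('i \<Rightarrow>\<^sub>0 'k))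
    \<Rightarrow> ('i \<Rightarrow>\<^sub>0 'k) \<Rightarrow> bool" where
  "central mult z \<longleftrightarrow> (\<forall>y. mult z y = mult y z)"

definition in_tensor_center :: "(('i \<Rightarrow>\<^sub>0 'k::field) \<Rightarrow> ('i \<Rightarrow>\<^sub>0 'k) \<Rightarrow> ('i \<Rightarrow>\<^sub>0 'k))
    \<Rightarrow> ('i \<times> 'i \<Rightarrow>\<^sub>0 'k) \<Rightarrow> bool" where
  "in_tensor_center mult x \<longleftrightarrow>
     (\<exists>ps :: (('i \<Rightarrow>\<^sub>0 'k) \<times> ('i \<Rightarrow>\<^sub>0 'k)) list.
        (\<forall>(u, z) \<in> set ps. central mult z) \<and> x = (\<Sum>(u, z) \<leftarrow> ps. tens u z))"

(* nu(h) = R^(2) h_2 R'^(2) \<otimes> S(h_1) S(R^(1)) h_3 R'^(1). *)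
definition nu ::
  "(('i \<Rightarrow>\<^sub>0 'k::field) \<Rightarrow> ('i \<Rightarrow>\<^sub>0 'k) \<Rightarrow> ('i \<Rightarrow>\<^sub>0 'k))
   \<Rightarrow> (('i \<Rightarrow>\<^sub>0 'k) \<Rightarrow> ('i \<times> 'i \<Rightarrow>\<^sub>0 'k))
   \<Rightarrow> (('i \<Rightarrow>\<^sub>0 'k) \<Rightarrow> ('i \<Rightarrow>\<^sub>0 'k)) \<Rightarrow> ('i \<times> 'i \<Rightarrow>\<^sub>0 'k)
   \<Rightarrow> ('i \<Rightarrow>\<^sub>0 'k) \<Rightarrow> ('i \<times> 'i \<Rightarrow>\<^sub>0 'k)" where
  "nu mult com ant R h = lsum (com2 com h) (\<lambda>(a, b, c). lsum R (\<lambda>(p, q). lsum R (\<lambda>(p', q').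
      tens (mult (mult (bv q) (bv b)) (bv q'))
           (mult (mult (mult (ant (bv a)) (ant (bv p))) (bv c)) (bv p')))))"

definition semiquasitriangular ::
  "(('i \<Rightarrow>\<^sub>0 'k::field) \<Rightarrow> ('i \<Rightarrow>\<^sub>0 'k) \<Rightarrow> ('i \<Rightarrow>\<^sub>0 'k)) \<Rightarrow> ('i \<Rightarrow>\<^sub>0 'k)
   \<Rightarrow> (('i \<Rightarrow>\<^sub>0 'k) \<Rightarrow> ('i \<times> 'i \<Rightarrow>\<^sub>0 'k)) \<Rightarrow> (('i \<Rightarrow>\<^sub>0 'k) \<Rightarrow> 'k)
   \<Rightarrow> (('i \<Rightarrow>\<^sub>0 'k) \<Rightarrow> ('i \<Rightarrow>\<^sub>0 'k)) \<Rightarrow> ('i \<times> 'i \<Rightarrow>\<^sub>0 'k) \<Rightarrow> bool" where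
  "semiquasitriangular mult one com cou ant R \<longleftrightarrow>
     hopf_algebra mult one com cou ant \<and>
     (\<exists>R'. mult2 mult R R' = tens one one \<and> mult2 mult R' R = tens one one) \<and>
     \<comment> \<open>(1)\<close>
     lsum R (\<lambda>(p, q). lsum (com (bv p)) (\<lambda>(a, b). tens3 (bv a) (bv b) (bv q)))
       = lsum R (\<lambda>(p, q). lsum R (\<lambda>(p', q'). tens3 (bv p) (bv p') (mult (bv q) (bv q')))) \<and>
     \<comment> \<open>(2)\<close>
     lsum R (\<lambda>(p, q). lsum (com (bv q)) (\<lambda>(a, b). tens3 (bv p) (bv a) (bv b)))
       = lsum R (\<lambda>(p, q). lsum R (\<lambda>(p', q'). tens3 (mult (bv p) (bv p')) (bv q') (bv q))) \<and>
     \<comment> \<open>(3)\<close>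
     lsum R (\<lambda>(p, q). lsum (com (bv q)) (\<lambda>(a, b). lsum R (\<lambda>(p', q').
         tens3 (bv p) (mult (bv b) (bv p')) (mult (bv a) (bv q')))))
       = lsum R (\<lambda>(p, q). lsum (com (bv q)) (\<lambda>(a, b). lsum R (\<lambda>(p', q').
         tens3 (bv p) (mult (bv p') (bv a)) (mult (bv q') (bv b))))) \<and>
     \<comment> \<open>(4)\<close>
     lsum R (\<lambda>(p, q). lsum (com (bv p)) (\<lambda>(a, b). lsum R (\<lambda>(p', q').
         tens3 (mult (bv b) (bv p')) (mult (bv a) (bv q')) (bv q))))
       = lsum R (\<lambda>(p, q). lsum (com (bv p)) (\<lambda>(a, b). lsum R (\<lambda>(p', q').
         tens3 (mult (bv p') (bv a)) (mult (bv q') (bv b)) (bv q)))) \<and>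
     \<comment> \<open>(5)\<close>
     (\<forall>h. in_tensor_center mult (nu mult com ant R h)) \<and>
     \<comment> \<open>(6)\<close>
     (\<forall>h. nu mult com ant R h = lsum (com2 com h) (\<lambda>(a, b, c). lsum R (\<lambda>(p, q). lsum R (\<lambda>(p', q').
        tens (mult (mult (bv p) (bv b)) (bv p'))
             (mult (mult (mult (ant (bv q')) (ant (bv a))) (bv q)) (bv c))))))"

definition R12 :: "('i \<Rightarrow>\<^sub>0 'k::field) \<Rightarrow> ('i \<times> 'i \<Rightarrow>\<^sub>0 'k) \<Rightarrow> ('i \<times> 'i \<times> 'i \<Rightarrow>\<^sub>0 'k)" where
  "R12 one R = lsum R (\<lambda>(p, q). tens3 (bv p) (bv q) one)"
definition R13 :: "('i \<Rightarrow>\<^sub>0 'k::field) \<Rightarrow> ('i \<times> 'i \<Rightarrow>\<^sub>0 'k) \<Rightarrow> ('i \<times> 'i \<times> 'i \<Rightarrow>\<^sub>0 'k)" where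
  "R13 one R = lsum R (\<lambda>(p, q). tens3 (bv p) one (bv q))"
definition R23 :: "('i \<Rightarrow>\<^sub>0 'k::field) \<Rightarrow> ('i \<times> 'i \<Rightarrow>\<^sub>0 'k) \<Rightarrow> ('i \<times> 'i \<times> 'i \<Rightarrow>\<^sub>0 'k)" where
  "R23 one R = lsum R (\<lambda>(p, q). tens3 one (bv p) (bv q))"

end

theory Submission
  imports Defs
begin

(* Axiom (2) says (id \<otimes> \<Delta>)(R) = R\<^sub>1\<^sub>3 R\<^sub>1\<^sub>2, and axiom (3) says
   \<tau>\<^sub>2\<^sub>3((id \<otimes> \<Delta>)(R)) R\<^sub>2\<^sub>3 = R\<^sub>2\<^sub>3 (id \<otimes> \<Delta>)(R), where \<tau>\<^sub>2\<^sub>3 swaps the last two tensor factors.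
   Since \<tau>\<^sub>2\<^sub>3 is multiplicative and exchanges R\<^sub>1\<^sub>2 and R\<^sub>1\<^sub>3, the left side is R\<^sub>1\<^sub>2 R\<^sub>1\<^sub>3 R\<^sub>2\<^sub>3
   and the right side is R\<^sub>2\<^sub>3 R\<^sub>1\<^sub>3 R\<^sub>1\<^sub>2. *)

lemma lookup_scal [simp]: "Poly_Mapping.lookup (scal c p) k = c * Poly_Mapping.lookup p k"
  by (simp add: scal_def Poly_Mapping.map.rep_eq when_def)

lemma scal_add_right: "scal c (x + y) = scal c x + scal c (y :: 'a \<Rightarrow>\<^sub>0 'k::semiring_0)"
  by (rule poly_mapping_eqI) (simp add: lookup_add distrib_left)

lemma scal_add_left: "scal (c + d) x = scal c x + scal d (x :: 'a \<Rightarrow>\<^sub>0 'k::semiring_0)"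
  by (rule poly_mapping_eqI) (simp add: lookup_add distrib_right)

lemma scal_scal: "scal c (scal d x) = scal (c * d) (x :: 'a \<Rightarrow>\<^sub>0 'k::semiring_0)"
  by (rule poly_mapping_eqI) (simp add: mult.assoc)

lemma scal_zero_left [simp]: "scal 0 x = (0 :: 'a \<Rightarrow>\<^sub>0 'k::semiring_0)"
  by (rule poly_mapping_eqI) simp

lemma scal_one [simp]: "scal 1 x = (x :: 'a \<Rightarrow>\<^sub>0 'k::semiring_1)"
  by (rule poly_mapping_eqI) simp

lemma scal_sum: "scal c (sum f S) = (\<Sum>a\<in>S. scal c (f a :: 'a \<Rightarrow>\<^sub>0 'k::semiring_0))"
  by (rule poly_mapping_eqI) (simp add: lookup_sum sum_distrib_left)

lemma lsum_eq_sum_superset: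
  assumes "finite S" "Poly_Mapping.keys x \<subseteq> S"
  shows "lsum x f = (\<Sum>a\<in>S. scal (Poly_Mapping.lookup x a) (f a :: 'b \<Rightarrow>\<^sub>0 'k::semiring_0))"
  unfolding lsum_def
  by (rule sum.mono_neutral_left) (use assms in \<open>auto simp: in_keys_iff\<close>)

lemma lsum_add: "lsum (x + y) f = lsum x f + lsum y (f :: _ \<Rightarrow> 'b \<Rightarrow>\<^sub>0 'k::semiring_0)"
proof -
  let ?S = "Poly_Mapping.keys x \<union> Poly_Mapping.keys y"
  have "lsum (x + y) f = (\<Sum>a\<in>?S. scal (Poly_Mapping.lookup (x + y) a) (f a))"
    by (rule lsum_eq_sum_superset) (auto dest: subsetD[OF keys_add])
  also have "\<dots> = (\<Sum>a\<in>?S. scal (Poly_Mapping.lookup x a) (f a))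
                 + (\<Sum>a\<in>?S. scal (Poly_Mapping.lookup y a) (f a))"
    by (simp add: lookup_add scal_add_left sum.distrib)
  also have "\<dots> = lsum x f + lsum y f"
    by (subst (1 2) lsum_eq_sum_superset[where S = ?S]) auto
  finally show ?thesis .
qed

lemma lsum_scal: "lsum (scal c x) f = scal c (lsum x (f :: _ \<Rightarrow> 'b \<Rightarrow>\<^sub>0 'k::semiring_0))"
proof -
  have "lsum (scal c x) f
      = (\<Sum>a\<in>Poly_Mapping.keys x. scal (Poly_Mapping.lookup (scal c x) a) (f a))"
    by (rule lsum_eq_sum_superset) (auto simp: in_keys_iff)
  then show ?thesis
    by (simp add: lsum_def scal_sum scal_scal)
qed

lemma lsum_add_fun: "lsum x (\<lambda>a. f a + g a) = lsum x f + lsum x (g :: _ \<Rightarrow> 'b \<Rightarrow>\<^sub>0 'k::semiring_0)"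
  by (simp add: lsum_def scal_add_right sum.distrib)

lemma lsum_scal_fun:
  "lsum x (\<lambda>a. scal c (f a)) = scal c (lsum x (f :: _ \<Rightarrow> 'b \<Rightarrow>\<^sub>0 'k::comm_semiring_0))"
  by (simp add: lsum_def scal_sum scal_scal mult.commute)

lemma lsum_bv [simp]: "lsum (bv a) f = (f a :: 'b \<Rightarrow>\<^sub>0 'k::semiring_1)"
  by (simp add: lsum_def bv_def)

lemma lsum_swap:
  "lsum x (\<lambda>a. lsum y (\<lambda>b. f a b)) = lsum y (\<lambda>b. lsum x (\<lambda>a. f a b :: 'c \<Rightarrow>\<^sub>0 'k::comm_semiring_0))"
  unfolding lsum_def scal_sum scal_scal
  by (subst sum.swap) (simp add: mult.commute)

lemma lsum_swap_dependent:
  "lsum x (\<lambda>a. lsum y (\<lambda>b. lsum (z b) (\<lambda>c. f a b c)))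
    = lsum y (\<lambda>b. lsum (z b) (\<lambda>c. lsum x (\<lambda>a. f a b c :: 'd \<Rightarrow>\<^sub>0 'k::comm_semiring_0)))"
  by (subst lsum_swap) (simp only: lsum_swap[of x])

lemma lsum_bv_right: "lsum x bv = (x :: 'a \<Rightarrow>\<^sub>0 'k::semiring_1)"
proof (rule poly_mapping_eqI)
  fix k
  have "(\<Sum>a\<in>Poly_Mapping.keys x. Poly_Mapping.lookup x a * (if a = k then 1 else 0))
      = (\<Sum>a\<in>Poly_Mapping.keys x. if a = k then Poly_Mapping.lookup x a else 0)"
    by (rule sum.cong) auto
  then show "Poly_Mapping.lookup (lsum x bv) k = Poly_Mapping.lookup x k"
    by (simp add: lsum_def lookup_sum bv_def lookup_single when_def in_keys_iff)
qed

lemma linear_pm_zero: "linear_pm f \<Longrightarrow> f 0 = (0 :: 'b \<Rightarrow>\<^sub>0 'k::semiring_0)"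
  unfolding linear_pm_def by (metis scal_zero_left)

lemma linear_pm_sum: "linear_pm f \<Longrightarrow> f (sum g S) = (\<Sum>a\<in>S. f (g a) :: 'b \<Rightarrow>\<^sub>0 'k::semiring_0)"
  by (induction S rule: infinite_finite_induct) (auto simp: linear_pm_zero linear_pm_def)

lemma linear_pm_lsum:
  "linear_pm f \<Longrightarrow> f (lsum x g) = lsum x (\<lambda>a. f (g a) :: 'b \<Rightarrow>\<^sub>0 'k::semiring_0)"
  unfolding lsum_def by (simp add: linear_pm_sum) (simp add: linear_pm_def)

lemma linear_pm_lsum_left: "linear_pm (\<lambda>x. lsum x (g :: _ \<Rightarrow> 'b \<Rightarrow>\<^sub>0 'k::semiring_0))"
  by (simp add: linear_pm_def lsum_add lsum_scal)

lemma linear_pm_lsum_fun: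
  assumes "\<And>a. linear_pm (F a)"
  shows "linear_pm (\<lambda>x. lsum y (\<lambda>a. F a x) :: 'b \<Rightarrow>\<^sub>0 'k::comm_semiring_0)"
  using assms unfolding linear_pm_def by (simp add: lsum_add_fun lsum_scal_fun)

lemma linear_pm_comp: "linear_pm f \<Longrightarrow> linear_pm g \<Longrightarrow> linear_pm (\<lambda>x. f (g x))"
  by (simp add: linear_pm_def)

lemma lsum_lsum: "lsum (lsum x f) g = lsum x (\<lambda>a. lsum (f a) (g :: _ \<Rightarrow> 'b \<Rightarrow>\<^sub>0 'k::semiring_0))"
  by (rule linear_pm_lsum[OF linear_pm_lsum_left])

lemma linear_pm_eq_on_basis:
  assumes "linear_pm f" "linear_pm g" "\<And>a. f (bv a) = (g (bv a) :: 'b \<Rightarrow>\<^sub>0 'k::semiring_1)"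
  shows "f x = g x"
proof -
  have "f x = lsum x (\<lambda>a. f (bv a))"
    using linear_pm_lsum[OF assms(1), of x bv] by (simp add: lsum_bv_right)
  also have "\<dots> = lsum x (\<lambda>a. g (bv a))"
    by (simp add: assms(3))
  also have "\<dots> = g x"
    using linear_pm_lsum[OF assms(2), of x bv] by (simp add: lsum_bv_right)
  finally show ?thesis .
qed

lemma tens3_bv: "tens3 (bv a) (bv b) (bv c) = (bv (a, b, c) :: _ \<Rightarrow>\<^sub>0 'k::semiring_1)"
  by (simp add: tens3_def)

lemma lsum_tens3:
  "lsum (tens3 x y z) f = lsum x (\<lambda>a. lsum y (\<lambda>b. lsum z (\<lambda>c. f (a, b, c) :: _ \<Rightarrow>\<^sub>0 'k::semiring_1)))"
  by (simp add: tens3_def lsum_lsum)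

lemma linear_pm_tens3_1: "linear_pm (\<lambda>x. tens3 x y (z :: _ \<Rightarrow>\<^sub>0 'k::comm_semiring_1))"
  unfolding tens3_def by (rule linear_pm_lsum_left)

lemma linear_pm_tens3_2: "linear_pm (\<lambda>y. tens3 x y (z :: _ \<Rightarrow>\<^sub>0 'k::comm_semiring_1))"
  unfolding tens3_def by (intro linear_pm_lsum_fun linear_pm_lsum_left)

lemma linear_pm_tens3_3: "linear_pm (\<lambda>z. tens3 x y (z :: _ \<Rightarrow>\<^sub>0 'k::comm_semiring_1))"
  unfolding tens3_def by (intro linear_pm_lsum_fun linear_pm_lsum_left)

lemma linear_pm_mult3_left: "linear_pm (\<lambda>X. mult3 mult X Y)"
  unfolding mult3_def by (rule linear_pm_lsum_left)

lemma linear_pm_mult3_right: "linear_pm (\<lambda>Y. mult3 mult X Y)"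
  unfolding mult3_def
  by (rule linear_pm_lsum_fun) (auto simp: case_prod_unfold intro: linear_pm_lsum_left)

lemma mult3_lsum_left: "mult3 mult (lsum x f) Y = lsum x (\<lambda>a. mult3 mult (f a) Y)"
  by (rule linear_pm_lsum[OF linear_pm_mult3_left])

lemma mult3_lsum_right: "mult3 mult X (lsum x f) = lsum x (\<lambda>a. mult3 mult X (f a))"
  by (rule linear_pm_lsum[OF linear_pm_mult3_right])

lemma mult3_bv: "mult3 mult (bv (a, b, c)) (bv (a', b', c'))
    = tens3 (mult (bv a) (bv a')) (mult (bv b) (bv b')) (mult (bv c) (bv c'))"
  by (simp add: mult3_def)

context
  fixes mult :: "('i \<Rightarrow>\<^sub>0 'k::field) \<Rightarrow> ('i \<Rightarrow>\<^sub>0 'k) \<Rightarrow> ('i \<Rightarrow>\<^sub>0 'k)"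
  assumes linear_mult_right: "\<And>x. linear_pm (mult x)"
    and linear_mult_left: "\<And>y. linear_pm (\<lambda>x. mult x y)"
begin

lemma mult3_tens3:
  "mult3 mult (tens3 x y z) (tens3 x' y' z') = tens3 (mult x x') (mult y y') (mult z z')"
  apply (rule linear_pm_eq_on_basis[where x = x])
    apply (rule linear_pm_comp[OF linear_pm_mult3_left linear_pm_tens3_1])
   apply (rule linear_pm_comp[OF linear_pm_tens3_1 linear_mult_left])
  apply (rule linear_pm_eq_on_basis[where x = y])
    apply (rule linear_pm_comp[OF linear_pm_mult3_left linear_pm_tens3_2])
   apply (rule linear_pm_comp[OF linear_pm_tens3_2 linear_mult_left])
  apply (rule linear_pm_eq_on_basis[where x = z])
    apply (rule linear_pm_comp[OF linear_pm_mult3_left linear_pm_tens3_3])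
   apply (rule linear_pm_comp[OF linear_pm_tens3_3 linear_mult_left])
  apply (rule linear_pm_eq_on_basis[where x = x'])
    apply (rule linear_pm_comp[OF linear_pm_mult3_right linear_pm_tens3_1])
   apply (rule linear_pm_comp[OF linear_pm_tens3_1 linear_mult_right])
  apply (rule linear_pm_eq_on_basis[where x = y'])
    apply (rule linear_pm_comp[OF linear_pm_mult3_right linear_pm_tens3_2])
   apply (rule linear_pm_comp[OF linear_pm_tens3_2 linear_mult_right])
  apply (rule linear_pm_eq_on_basis[where x = z'])
    apply (rule linear_pm_comp[OF linear_pm_mult3_right linear_pm_tens3_3])
   apply (rule linear_pm_comp[OF linear_pm_tens3_3 linear_mult_right])
  apply (simp add: mult3_bv tens3_bv)
  done

lemma mult3_assoc:
  assumes "\<And>x y z. mult (mult x y) z = mult x (mult y z)"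
  shows "mult3 mult (mult3 mult X Y) Z = mult3 mult X (mult3 mult Y Z)"
  apply (rule linear_pm_eq_on_basis[where x = X])
    apply (rule linear_pm_comp[OF linear_pm_mult3_left linear_pm_mult3_left])
   apply (rule linear_pm_mult3_left)
  apply (rule linear_pm_eq_on_basis[where x = Y])
    apply (rule linear_pm_comp[OF linear_pm_mult3_left linear_pm_mult3_right])
   apply (rule linear_pm_comp[OF linear_pm_mult3_right linear_pm_mult3_left])
  apply (rule linear_pm_eq_on_basis[where x = Z])
    apply (rule linear_pm_mult3_right)
   apply (rule linear_pm_comp[OF linear_pm_mult3_right linear_pm_mult3_right])
  subgoal for a b c
    by (cases a, cases b, cases c) (simp add: mult3_tens3 assms flip: tens3_bv)
  done

end

definition flip23 :: "('a \<times> 'b \<times> 'c \<Rightarrow>\<^sub>0 'k::semiring_1) \<Rightarrow> ('a \<times> 'c \<times> 'b \<Rightarrow>\<^sub>0 'k)" where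
  "flip23 X = lsum X (\<lambda>(a, b, c). bv (a, c, b))"

lemma linear_pm_flip23: "linear_pm flip23"
  unfolding flip23_def[abs_def] by (rule linear_pm_lsum_left)

lemma flip23_tens3: "flip23 (tens3 x y z) = tens3 x z (y :: _ \<Rightarrow>\<^sub>0 'k::comm_semiring_1)"
proof -
  have "flip23 (tens3 x y z) = lsum x (\<lambda>a. lsum y (\<lambda>b. lsum z (\<lambda>c. bv (a, c, b))))"
    by (simp add: flip23_def lsum_tens3)
  then show ?thesis
    by (simp add: tens3_def lsum_swap[of y z])
qed

lemma flip23_mult3: "flip23 (mult3 mult X Y) = mult3 mult (flip23 X) (flip23 Y)"
proof -
  have "flip23 (mult3 mult X Y) = lsum X (\<lambda>(a, b, c). lsum Y (\<lambda>(a', b', c').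
      tens3 (mult (bv a) (bv a')) (mult (bv c) (bv c')) (mult (bv b) (bv b'))))"
    by (simp add: mult3_def linear_pm_lsum[OF linear_pm_flip23] case_prod_unfold flip23_tens3)
  then show ?thesis
    by (simp add: mult3_def flip23_def lsum_lsum case_prod_unfold)
qed

definition id_tens_com ::
  "(('i \<Rightarrow>\<^sub>0 'k::semiring_1) \<Rightarrow> ('i \<times> 'i \<Rightarrow>\<^sub>0 'k)) \<Rightarrow> ('j \<times> 'i \<Rightarrow>\<^sub>0 'k) \<Rightarrow> ('j \<times> 'i \<times> 'i \<Rightarrow>\<^sub>0 'k)"
where
  "id_tens_com com X = lsum X (\<lambda>(p, q). lsum (com (bv q)) (\<lambda>(a, b). tens3 (bv p) (bv a) (bv b)))"

lemma flip23_R13: "flip23 (R13 one R) = R12 one R"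
  by (simp add: R12_def R13_def linear_pm_lsum[OF linear_pm_flip23] case_prod_unfold flip23_tens3)

lemma flip23_R12: "flip23 (R12 one R) = R13 one R"
  by (simp add: R12_def R13_def linear_pm_lsum[OF linear_pm_flip23] case_prod_unfold flip23_tens3)

context
  fixes mult :: "('i \<Rightarrow>\<^sub>0 'k::field) \<Rightarrow> ('i \<Rightarrow>\<^sub>0 'k) \<Rightarrow> ('i \<Rightarrow>\<^sub>0 'k)"
    and one com cou ant
  assumes hopf: "hopf_algebra mult one com cou ant"
begin

lemma hopf_linear_mult_right: "linear_pm (mult x)"
  using hopf by (simp add: hopf_algebra_def)

lemma hopf_linear_mult_left: "linear_pm (\<lambda>x. mult x y)"
  using hopf by (simp add: hopf_algebra_def)

lemma hopf_mult_one_left: "mult one x = x"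
  using hopf by (simp add: hopf_algebra_def)

lemma hopf_mult_one_right: "mult x one = x"
  using hopf by (simp add: hopf_algebra_def)

lemmas hopf_mult3_tens3 = mult3_tens3[OF hopf_linear_mult_right hopf_linear_mult_left]

lemma hopf_mult3_assoc: "mult3 mult (mult3 mult X Y) Z = mult3 mult X (mult3 mult Y Z)"
  using hopf mult3_assoc[OF hopf_linear_mult_right hopf_linear_mult_left]
  by (simp add: hopf_algebra_def)

end

context
  fixes mult one com cou ant R
  assumes sqt: "semiquasitriangular mult one com cou ant R"
begin

lemma sqt_hopf_algebra: "hopf_algebra mult one com cou ant"
  using sqt by (simp add: semiquasitriangular_def)

lemmas sqt_expand_simps = hopf_mult3_tens3[OF sqt_hopf_algebra]
  hopf_mult_one_left[OF sqt_hopf_algebra] hopf_mult_one_right[OF sqt_hopf_algebra]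

lemma id_tens_com_R: "id_tens_com com R = mult3 mult (R13 one R) (R12 one R)"
proof -
  have "mult3 mult (R13 one R) (R12 one R)
      = lsum R (\<lambda>(p, q). lsum R (\<lambda>(p', q'). tens3 (mult (bv p) (bv p')) (bv q') (bv q)))"
    by (simp add: R12_def R13_def mult3_lsum_left mult3_lsum_right case_prod_unfold
        sqt_expand_simps)
      (rule lsum_swap)
  with sqt show ?thesis
    by (simp add: id_tens_com_def semiquasitriangular_def)
qed

lemma flip23_id_tens_com_R_mult3_R23:
  "mult3 mult (flip23 (id_tens_com com R)) (R23 one R) = mult3 mult (R23 one R) (id_tens_com com R)"
proof -
  have "mult3 mult (flip23 (id_tens_com com R)) (R23 one R)
      = lsum R (\<lambda>(p, q). lsum (com (bv q)) (\<lambda>(a, b). lsum R (\<lambda>(p', q').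
          tens3 (bv p) (mult (bv b) (bv p')) (mult (bv a) (bv q')))))"
    by (simp add: id_tens_com_def R23_def linear_pm_lsum[OF linear_pm_flip23] flip23_tens3
        mult3_lsum_left mult3_lsum_right case_prod_unfold sqt_expand_simps)
      (rule lsum_swap_dependent)
  also have "\<dots> = lsum R (\<lambda>(p, q). lsum (com (bv q)) (\<lambda>(a, b). lsum R (\<lambda>(p', q').
          tens3 (bv p) (mult (bv p') (bv a)) (mult (bv q') (bv b)))))"
    using sqt by (simp add: semiquasitriangular_def)
  also have "\<dots> = mult3 mult (R23 one R) (id_tens_com com R)"
    by (simp add: id_tens_com_def R23_def mult3_lsum_left mult3_lsum_right case_prod_unfold
        sqt_expand_simps)
  finally show ?thesis .
qed

end

theorem proposition1p4:
  fixes mult :: "('i \<Rightarrow>\<^sub>0 'k::field) \<Rightarrow> ('i \<Rightarrow>\<^sub>0 'k) \<Rightarrow> ('i \<Rightarrow>\<^sub>0 'k)"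
    and one :: "'i \<Rightarrow>\<^sub>0 'k"
    and com :: "('i \<Rightarrow>\<^sub>0 'k) \<Rightarrow> ('i \<times> 'i \<Rightarrow>\<^sub>0 'k)"
    and cou :: "('i \<Rightarrow>\<^sub>0 'k) \<Rightarrow> 'k"
    and ant :: "('i \<Rightarrow>\<^sub>0 'k) \<Rightarrow> ('i \<Rightarrow>\<^sub>0 'k)"
    and R :: "'i \<times> 'i \<Rightarrow>\<^sub>0 'k"
  assumes "semiquasitriangular mult one com cou ant R"
  shows "mult3 mult (mult3 mult (R12 one R) (R13 one R)) (R23 one R)
       = mult3 mult (mult3 mult (R23 one R) (R13 one R)) (R12 one R)"
proof -
  let ?D = "id_tens_com com R"
  have "mult3 mult (mult3 mult (R12 one R) (R13 one R)) (R23 one R)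
      = mult3 mult (flip23 (mult3 mult (R13 one R) (R12 one R))) (R23 one R)"
    by (simp add: flip23_mult3 flip23_R12 flip23_R13)
  also have "\<dots> = mult3 mult (flip23 ?D) (R23 one R)"
    by (simp add: id_tens_com_R[OF assms])
  also have "\<dots> = mult3 mult (R23 one R) ?D"
    by (rule flip23_id_tens_com_R_mult3_R23[OF assms])
  also have "\<dots> = mult3 mult (R23 one R) (mult3 mult (R13 one R) (R12 one R))"
    by (simp add: id_tens_com_R[OF assms])
  also have "\<dots> = mult3 mult (mult3 mult (R23 one R) (R13 one R)) (R12 one R)"
    by (rule hopf_mult3_assoc[OF sqt_hopf_algebra[OF assms], symmetric])
  finally show ?thesis .
qed

end
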